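(* Let $(\delta_k)_k\subset[0,1]^2$ with $\delta_k\to\delta\in[0,1]^2$. For every $\varphi\in C_c^\infty(\mathbb{R}^3)$ it holds that $\mathcal{Q}_{\rho,\delta_k}\varphi\to\mathcal{Q}_{\rho,\delta}\varphi$ and $D_{\rho,\delta_k}\varphi\to D_{\rho,\delta}\varphi$ uniformly on $\mathbb{R}^3$ as $k\to\infty$.
   Context: For $r=(\bar r,r_3)\in[0,\infty)^2$, $T_r=\mathrm{diag}(\bar r,\bar r,r_3)$. The kernel $\rho:\mathbb{R}^3\setminus\{0\}\to[0,\infty)$ is radial, $\rho(z)=\rho^{\rm rad}(|z|)$, with, for some $\eta_0>0$, $\nu>0$, $0<\sigma\le\gamma<1$: (H0) $\inf_{B_{\eta_0}(0)}\rho>0$, $\operatorname{supp}\rho=\overline{B_1(0)}$, $\int\rho=3$; (H1) $r\mapsto r^{\nu+1}\rho^{\rm rad}(r)$ non-increasing on $(0,\infty)$; (H2) $f_\rho(r):=r\rho^{\rm rad}(r)$ smooth on $(0,\infty)$ with $|f_\rho^{(k)}(r)|\le C_kf_\rho(r)/r^k$ on $(0,\eta_0)$; (H3) $r^{2+\sigma}\rho^{\rm rad}$ almost non-increasing, (H4) $r^{2+\gamma}\rho^{\rm rad}$ almost non-decreasing on $(0,\eta_0)$ (almost monotone: $\exists C>0$, $f(t_1)\ge Cf(t_2)$ resp. $\le$, for $t_1<t_2$). $Q_\rho(z):=\int_{|z|}^\infty\rho^{\rm rad}(t)/t\,dt$; $\mathcal{Q}_{\rho,\delta}\varphi(x):=\int_{\mathbb{R}^3}Q_\rho(z)\varphi(x-T_\delta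 z)dz$ and $D_{\rho,\delta}\varphi:=\nabla\mathcal{Q}_{\rho,\delta}\varphi$. *)

theory Defs
  imports "HOL-Analysis.Analysis"
begin

definition Tmat :: "real \<times> real \<Rightarrow> real^3 \<Rightarrow> real^3" where
  "Tmat r z = (\<chi> i. if i = 3 then snd r * z $ i else fst r * z $ i)"

text \<open>Q_rho as a function of the radius: Q_rho(z) = Qrad rho_rad |z|.\<close>
definition Qrad :: "(real \<Rightarrow> real) \<Rightarrow> real \<Rightarrow> real" where
  "Qrad rhorad s = integral {s..} (\<lambda>t. rhorad t / t)"

definition Qop :: "(real \<Rightarrow> real) \<Rightarrow> real \<times> real \<Rightarrow> (real^3 \<Rightarrow> real) \<Rightarrow> real^3 \<Rightarrow> real" where
  "Qop rhorad d phi x = integral UNIV (\<lambda>z. Qrad rhorad (norm z) * phi (x - Tmat d z))"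

definition grad3 :: "(real^3 \<Rightarrow> real) \<Rightarrow> real^3 \<Rightarrow> real^3" where
  "grad3 f x = (\<chi> i. frechet_derivative f (at x) (axis i 1))"

definition Dop :: "(real \<Rightarrow> real) \<Rightarrow> real \<times> real \<Rightarrow> (real^3 \<Rightarrow> real) \<Rightarrow> real^3 \<Rightarrow> real^3" where
  "Dop rhorad d phi = grad3 (Qop rhorad d phi)"

definition pderiv3 :: "3 \<Rightarrow> (real^3 \<Rightarrow> real) \<Rightarrow> real^3 \<Rightarrow> real" where
  "pderiv3 i f x = frechet_derivative f (at x) (axis i 1)"

fun iter_pderiv3 :: "3 list \<Rightarrow> (real^3 \<Rightarrow> real) \<Rightarrow> real^3 \<Rightarrow> real" where
  "iter_pderiv3 [] f = f"
| "iter_pderiv3 (i # is) f = pderiv3 i (iter_pderiv3 is f)"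

definition smooth3 :: "(real^3 \<Rightarrow> real) \<Rightarrow> bool" where
  "smooth3 f \<longleftrightarrow> (\<forall>is x. iter_pderiv3 is f differentiable (at x))"

definition Cc_inf3 :: "(real^3 \<Rightarrow> real) \<Rightarrow> bool" where
  "Cc_inf3 f \<longleftrightarrow> smooth3 f \<and> compact (closure {x. f x \<noteq> 0})"

end

theory Submission
  imports Defs
begin

text \<open>Write Q_{rho,delta} phi (x) as the integral of K z * phi (x - T_delta z) with the radial
  kernel K z = Q_rho (norm z). By H0 the kernel vanishes outside the unit ball, and H1 and H4
  give rho t \<le> B * t powr (- 2 - gamma) for 0 < t \<le> 1, hence K z \<le> B' * norm z powr (- 2 - gamma);
  as gamma < 1, K is integrable on R^3. For norm z \<le> 1 one has
  norm (T_{delta_k} z - T_delta z) \<le> 3 * norm (delta_k - delta), so uniform continuity of phi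
  makes Q_{rho,delta_k} phi - Q_{rho,delta} phi uniformly small. Differentiating under the
  integral sign, justified by a first-order Taylor estimate of phi that is uniform in the base
  point, shows that D_{rho,delta} phi is Q_{rho,delta} applied to the partial derivatives of phi,
  and the first argument applied to those gives the second claim.\<close>

section \<open>Compactly supported smooth functions\<close>

lemma bounded_range_if_vanishing_outside_cball:
  fixes f :: "'a::{heine_borel,real_normed_vector} \<Rightarrow> 'b::real_normed_vector"
  assumes "continuous_on UNIV f" and "\<And>y. R < norm y \<Longrightarrow> f y = 0"
  shows "bounded (range f)"
proof -
  have "bounded (f ` cball 0 R)"
    by (intro compact_imp_bounded compact_continuous_image continuous_on_subset[OF assms(1)]) auto
  moreover have "range f \<subseteq> insert 0 (f ` cball 0 R)"
    using assms(2) by (force simp: not_le)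
  ultimately show ?thesis
    by (metis bounded_insert bounded_subset)
qed

lemma uniformly_continuous_if_vanishing_outside_cball:
  fixes f :: "'a::{heine_borel,real_normed_vector} \<Rightarrow> 'b::real_normed_vector"
  assumes cont: "continuous_on UNIV f" and vanish: "\<And>y. R < norm y \<Longrightarrow> f y = 0"
  shows "uniformly_continuous_on UNIV f"
  unfolding uniformly_continuous_on_def
proof (intro allI impI)
  fix e :: real assume "e > 0"
  have "uniformly_continuous_on (cball 0 (R + 1)) f"
    by (intro compact_uniformly_continuous continuous_on_subset[OF cont]) auto
  then obtain d where d: "d > 0"
    and close: "\<And>x x'. x \<in> cball 0 (R + 1) \<Longrightarrow> x' \<in> cball 0 (R + 1) \<Longrightarrow> dist x' x < d \<Longrightarrow> dist (f x') (f x) < e"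
    using \<open>e > 0\<close> by (metis uniformly_continuous_onE)
  have "dist (f x') (f x) < e" if "dist x' x < min d 1" for x x'
  proof (cases "norm x \<le> R + 1 \<and> norm x' \<le> R + 1")
    case True
    then show ?thesis using close that by simp
  next
    case False
    with that have "R < norm x \<and> R < norm x'"
      using norm_triangle_ineq3[of x' x] by (auto simp: dist_norm)
    then show ?thesis using vanish \<open>e > 0\<close> by simp
  qed
  then show "\<exists>d>0. \<forall>x\<in>UNIV. \<forall>x'\<in>UNIV. dist x' x < d \<longrightarrow> dist (f x') (f x) < e"
    using d by (intro exI[of _ "min d 1"]) auto
qed

lemma onorm_coordinate_sum_le:
  fixes c :: "'n::finite \<Rightarrow> real" and b :: real
  assumes "\<And>i. \<bar>c i\<bar> \<le> b"
  shows "onorm (\<lambda>h::real^'n. \<Sum>i\<in>UNIV. h $ i * c i) \<le> CARD('n) * b"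
proof (rule onorm_le)
  fix h :: "real^'n"
  have "\<bar>\<Sum>i\<in>UNIV. h $ i * c i\<bar> \<le> (\<Sum>i\<in>(UNIV::'n set). norm h * b)"
  proof (rule order.trans[OF sum_abs sum_mono])
    fix i
    show "\<bar>h $ i * c i\<bar> \<le> norm h * b"
      unfolding abs_mult using assms[of i] by (intro mult_mono component_le_norm_cart) auto
  qed
  then show "norm (\<Sum>i\<in>UNIV. h $ i * c i) \<le> CARD('n) * b * norm h"
    by (simp add: algebra_simps)
qed

lemma uniform_linearization:
  fixes f :: "real^'n \<Rightarrow> real" and P :: "'n \<Rightarrow> real^'n \<Rightarrow> real"
  assumes deriv: "\<And>w. (f has_derivative (\<lambda>h. \<Sum>i\<in>UNIV. h $ i * P i w)) (at w)"
    and unif: "\<And>i. uniformly_continuous_on UNIV (P i)"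
    and "e > 0"
  obtains \<delta> where "\<delta> > 0"
    and "\<And>y h. norm h < \<delta> \<Longrightarrow> \<bar>f (y + h) - f y - (\<Sum>i\<in>UNIV. h $ i * P i y)\<bar> \<le> e * norm h"
proof -
  have "\<exists>\<delta>>0. \<forall>w y. dist w y < \<delta> \<longrightarrow> \<bar>P i w - P i y\<bar> \<le> e / CARD('n)" for i
  proof -
    have "e / CARD('n) > 0" using \<open>e > 0\<close> by simp
    then have "\<exists>\<delta>>0. \<forall>y\<in>UNIV. \<forall>w\<in>UNIV. dist w y < \<delta> \<longrightarrow> dist (P i w) (P i y) < e / CARD('n)"
      using unif[of i] unfolding uniformly_continuous_on_def by blast
    then show ?thesis by (simp add: dist_real_def) (meson less_imp_le)
  qed
  then obtain \<delta>i where \<delta>i: "\<And>i. \<delta>i i > 0"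
    and close: "\<And>i w y. dist w y < \<delta>i i \<Longrightarrow> \<bar>P i w - P i y\<bar> \<le> e / CARD('n)"
    by metis
  define \<delta> where "\<delta> = Min (range \<delta>i)"
  have "\<delta> > 0" and \<delta>_le: "\<And>i. \<delta> \<le> \<delta>i i"
    using \<delta>i by (auto simp: \<delta>_def)
  moreover have "\<bar>f (y + h) - f y - (\<Sum>i\<in>UNIV. h $ i * P i y)\<bar> \<le> e * norm h"
    if "norm h < \<delta>" for y h
  proof -
    have "onorm ((\<lambda>h. \<Sum>i\<in>UNIV. h $ i * P i w) - (\<lambda>h. \<Sum>i\<in>UNIV. h $ i * P i y)) \<le> e"
      if "w \<in> ball y \<delta>" for w
    proof -
      have "\<bar>P i w - P i y\<bar> \<le> e / CARD('n)" for i
        using that close[of w y i] \<delta>_le[of i] by (simp add: dist_commute)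
      then have "onorm (\<lambda>h::real^'n. \<Sum>i\<in>UNIV. h $ i * (P i w - P i y)) \<le> CARD('n) * (e / CARD('n))"
        by (rule onorm_coordinate_sum_le)
      moreover have "(\<lambda>h. \<Sum>i\<in>UNIV. h $ i * P i w) - (\<lambda>h. \<Sum>i\<in>UNIV. h $ i * P i y)
          = (\<lambda>h::real^'n. \<Sum>i\<in>UNIV. h $ i * (P i w - P i y))"
        by (simp add: fun_eq_iff sum_subtractf right_diff_distrib)
      ultimately show ?thesis by simp
    qed
    then have "norm (f (y + h) - f y - (\<Sum>i\<in>UNIV. (y + h - y) $ i * P i y)) \<le> norm (y + h - y) * e"
      using \<open>norm h < \<delta>\<close> \<open>\<delta> > 0\<close>
      by (intro differentiable_bound_linearization[where S = "ball y \<delta>"] has_derivative_at_withinI[OF deriv])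
        (auto simp: dist_norm intro: le_less_trans[OF mult_left_le_one_le])
    then show ?thesis by (simp add: mult.commute)
  qed
  ultimately show ?thesis using that by blast
qed

lemma linear_eq_coordinate_sum:
  fixes L :: "real^'n \<Rightarrow> real"
  assumes "linear L"
  shows "L h = (\<Sum>i\<in>UNIV. h $ i * L (axis i 1))"
proof -
  have "L h = L (\<Sum>i\<in>UNIV. h $ i *\<^sub>R axis i 1)"
    using basis_expansion[of h] by (simp add: scalar_mult_eq_scaleR)
  also have "\<dots> = (\<Sum>i\<in>UNIV. h $ i * L (axis i 1))"
    by (simp add: linear_sum[OF assms] linear_scale[OF assms])
  finally show ?thesis .
qed

lemma has_derivative_pderiv3:
  assumes "f differentiable (at w)"
  shows "(f has_derivative (\<lambda>h. \<Sum>i\<in>UNIV. h $ i * pderiv3 i f w)) (at w)"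
proof -
  have deriv: "(f has_derivative frechet_derivative f (at w)) (at w)"
    using assms by (rule frechet_derivative_works[THEN iffD1])
  moreover have "frechet_derivative f (at w) = (\<lambda>h. \<Sum>i\<in>UNIV. h $ i * pderiv3 i f w)"
  proof
    fix h
    show "frechet_derivative f (at w) h = (\<Sum>i\<in>UNIV. h $ i * pderiv3 i f w)"
      unfolding pderiv3_def by (rule linear_eq_coordinate_sum[OF has_derivative_linear[OF deriv]])
  qed
  ultimately show ?thesis by simp
qed

lemma grad3_eqI:
  assumes "(f has_derivative (\<lambda>h. \<Sum>i\<in>UNIV. h $ i * c i)) (at x)"
  shows "grad3 f x = (\<chi> i. c i)"
proof -
  have "(\<Sum>j\<in>UNIV. axis i 1 $ j * c j) = c i" for i :: 3
    using inner_axis[of "\<chi> j. c j" i 1] by (simp add: inner_vec_def mult.commute)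
  then show ?thesis
    unfolding grad3_def frechet_derivative_at[OF assms, symmetric] by simp
qed

lemma smooth3_pderiv3_differentiable:
  assumes "smooth3 f"
  shows "f differentiable (at x)" and "pderiv3 i f differentiable (at x)"
proof -
  have "iter_pderiv3 [] f differentiable (at x)" "iter_pderiv3 [i] f differentiable (at x)"
    using assms unfolding smooth3_def by blast+
  then show "f differentiable (at x)" "pderiv3 i f differentiable (at x)"
    by simp_all
qed

lemma Cc_inf3_vanishes_outside_cball:
  assumes "Cc_inf3 f"
  obtains R where "\<And>y. R < norm y \<Longrightarrow> f y = 0" and "\<And>i y. R < norm y \<Longrightarrow> pderiv3 i f y = 0"
proof -
  have "bounded (closure {x. f x \<noteq> 0})"
    using assms by (simp add: Cc_inf3_def compact_imp_bounded)
  then obtain R where R: "\<And>x. x \<in> closure {x. f x \<noteq> 0} \<Longrightarrow> norm x \<le> R"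
    unfolding bounded_iff by blast
  have vanish: "f y = 0" if "R < norm y" for y
    using R[of y] closure_subset[of "{x. f x \<noteq> 0}"] that by force
  have "pderiv3 i f y = 0" if "R < norm y" for i y
  proof -
    have "((\<lambda>_. 0) has_derivative (\<lambda>_. 0)) (at y)" by simp
    then have "(f has_derivative (\<lambda>_. 0)) (at y)"
      by (rule has_derivative_transform_within_open[where s = "- cball 0 R"]) (use that vanish in auto)
    then show ?thesis
      by (simp add: pderiv3_def frechet_derivative_at[symmetric])
  qed
  with vanish show ?thesis using that by blast
qed

lemma Cc_inf3_uniformly_continuous_bounded:
  assumes "Cc_inf3 f"
  shows "uniformly_continuous_on UNIV f" "bounded (range f)"
    and "uniformly_continuous_on UNIV (pderiv3 i f)" "bounded (range (pderiv3 i f))"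
proof -
  obtain R where vanish: "\<And>y. R < norm y \<Longrightarrow> f y = 0"
    and vanish_pderiv: "\<And>i y. R < norm y \<Longrightarrow> pderiv3 i f y = 0"
    using Cc_inf3_vanishes_outside_cball[OF assms] by blast
  have "continuous_on UNIV g" if "\<And>x. g differentiable (at x)" for g :: "real^3 \<Rightarrow> real"
    using that by (intro continuous_at_imp_continuous_on ballI differentiable_imp_continuous_within)
  moreover have "smooth3 f" using assms by (simp add: Cc_inf3_def)
  ultimately have "continuous_on UNIV f" "continuous_on UNIV (pderiv3 i f)"
    using smooth3_pderiv3_differentiable by blast+
  then show "uniformly_continuous_on UNIV f" "bounded (range f)"
    and "uniformly_continuous_on UNIV (pderiv3 i f)" "bounded (range (pderiv3 i f))"
    using vanish vanish_pderiv
    by (auto intro: uniformly_continuous_if_vanishing_outside_cball bounded_range_if_vanishing_outside_cball)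
qed

section \<open>The kernel Q_rho\<close>

lemma rhorad_eq_0_if_support_cball:
  fixes rhorad :: "real \<Rightarrow> real"
  assumes supp: "closure {z::real^3. z \<noteq> 0 \<and> rhorad (norm z) \<noteq> 0} = cball 0 1" and "1 < t"
  shows "rhorad t = 0"
proof (rule ccontr)
  assume "rhorad t \<noteq> 0"
  define v :: "real^3" where "v = t *\<^sub>R axis 1 1"
  have "norm v = t" using \<open>1 < t\<close> by (simp add: v_def)
  with \<open>rhorad t \<noteq> 0\<close> \<open>1 < t\<close> have "v \<in> closure {z::real^3. z \<noteq> 0 \<and> rhorad (norm z) \<noteq> 0}"
    by (intro closure_subset[THEN subsetD]) auto
  with supp \<open>norm v = t\<close> \<open>1 < t\<close> show False by simp
qed

lemma continuous_on_if_times_differentiable: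
  fixes rhorad :: "real \<Rightarrow> real"
  assumes "\<And>r. 0 < r \<Longrightarrow> (\<lambda>t. t * rhorad t) differentiable (at r)"
  shows "continuous_on {0<..} rhorad"
proof -
  have "continuous_on {0<..} (\<lambda>t. t * rhorad t / t)"
    using assms by (intro continuous_intros differentiable_imp_continuous_on
        differentiable_at_imp_differentiable_on) auto
  then show ?thesis by (rule continuous_on_eq) auto
qed

lemma rhorad_le_powr:
  fixes rhorad :: "real \<Rightarrow> real"
  assumes nonneg: "\<And>t. 0 < t \<Longrightarrow> 0 \<le> rhorad t"
    and mono: "\<And>s t. 0 < s \<Longrightarrow> s \<le> t \<Longrightarrow> t powr b * rhorad t \<le> s powr b * rhorad s"
    and almost_mono: "\<And>t1 t2. 0 < t1 \<Longrightarrow> t1 < t2 \<Longrightarrow> t2 < eta \<Longrightarrow>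
      t1 powr a * rhorad t1 \<le> C * (t2 powr a * rhorad t2)"
    and "0 < eta" "0 \<le> a" "0 \<le> b"
  obtains B where "0 \<le> B" "\<And>t. 0 < t \<Longrightarrow> t \<le> 1 \<Longrightarrow> rhorad t \<le> B * t powr (- a)"
proof -
  define t0 where "t0 = min eta 1 / 2"
  have t0: "0 < t0" "t0 < eta" "t0 < 1" using \<open>0 < eta\<close> by (auto simp: t0_def)
  define B where "B = max (C * t0 powr a) 1 * rhorad t0"
  have "0 \<le> rhorad t0" using nonneg t0 by simp
  then have "0 \<le> B" "C * t0 powr a * rhorad t0 \<le> B" "rhorad t0 \<le> B"
    using mult_right_mono[OF max.cobounded1 \<open>0 \<le> rhorad t0\<close>, of "C * t0 powr a" 1]
      mult_right_mono[OF max.cobounded2 \<open>0 \<le> rhorad t0\<close>, of 1 "C * t0 powr a"]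
    by (simp_all add: B_def)
  moreover have "rhorad t \<le> B * t powr (- a)" if "0 < t" "t \<le> 1" for t
  proof (cases "t < t0")
    case True
    have "t powr a * rhorad t \<le> C * (t0 powr a * rhorad t0)"
      using almost_mono[of t t0] True t0 \<open>0 < t\<close> by simp
    then have "rhorad t \<le> C * t0 powr a * rhorad t0 * t powr (- a)"
      using \<open>0 < t\<close> by (simp add: powr_minus field_simps)
    also have "\<dots> \<le> B * t powr (- a)"
      using \<open>C * t0 powr a * rhorad t0 \<le> B\<close> by (simp add: mult_right_mono)
    finally show ?thesis .
  next
    case False
    have "t powr b * rhorad t \<le> t0 powr b * rhorad t0"
      using mono[of t0 t] t0 False by simp
    also have "\<dots> \<le> t powr b * rhorad t0"
      using False t0 \<open>0 \<le> b\<close> \<open>0 \<le> rhorad t0\<close> by (intro mult_right_mono powr_mono2) auto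
    finally have "rhorad t \<le> rhorad t0" using \<open>0 < t\<close> by simp
    also have "\<dots> \<le> B" by fact
    also have "\<dots> \<le> B * t powr (- a)"
      using \<open>0 \<le> B\<close> that \<open>0 \<le> a\<close> by (simp add: ge_one_powr_ge_zero powr_minus one_le_inverse powr_le1
          mult_le_cancel_left1)
    finally show ?thesis .
  qed
  ultimately show ?thesis using that by blast
qed

lemma Qrad_eq_0:
  assumes "\<And>t. 1 < t \<Longrightarrow> rhorad t = 0" "1 < s"
  shows "Qrad rhorad s = 0"
  unfolding Qrad_def using assms by (subst integral_cong[of _ _ "\<lambda>_. 0"]) auto

context
  fixes rhorad :: "real \<Rightarrow> real"
  assumes vanish: "\<And>t. 1 < t \<Longrightarrow> rhorad t = 0"
    and cont: "continuous_on {0<..} rhorad"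
begin

lemma integrable_on_rhorad_div:
  assumes "0 < s"
  shows "(\<lambda>t. rhorad t / t) integrable_on {s..u}"
  using assms by (intro integrable_continuous_interval continuous_intros continuous_on_subset[OF cont]) auto

lemma Qrad_eq_integral:
  assumes "0 < s" "s \<le> 1"
  shows "Qrad rhorad s = integral {s..1} (\<lambda>t. rhorad t / t)"
proof -
  let ?h = "\<lambda>t. rhorad t / t"
  have "(?h has_integral integral {s..1} ?h) {s..1}"
    using integrable_on_rhorad_div[OF \<open>0 < s\<close>] by (rule integrable_integral)
  then have "((\<lambda>t. if t \<in> {s..1} then ?h t else 0) has_integral integral {s..1} ?h) {s..}"
    by (subst has_integral_restrict) auto
  then have "(?h has_integral integral {s..1} ?h) {s..}"
    by (rule has_integral_eq[rotated]) (auto simp: vanish)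
  then show ?thesis unfolding Qrad_def by (rule integral_unique)
qed

lemma Qrad_nonneg:
  assumes nonneg: "\<And>t. 0 < t \<Longrightarrow> 0 \<le> rhorad t" and "0 < s"
  shows "0 \<le> Qrad rhorad s"
proof (cases "s \<le> 1")
  case True
  then show ?thesis
    using assms integrable_on_rhorad_div[OF \<open>0 < s\<close>] nonneg
    by (auto simp: Qrad_eq_integral intro!: integral_nonneg)
qed (simp add: Qrad_eq_0[OF vanish])

lemma Qrad_antimono:
  assumes nonneg: "\<And>t. 0 < t \<Longrightarrow> 0 \<le> rhorad t" and "0 < s" "s \<le> s'"
  shows "Qrad rhorad s' \<le> Qrad rhorad s"
proof (cases "s' \<le> 1")
  case True
  let ?h = "\<lambda>t. rhorad t / t"
  have "integral {s..s'} ?h + integral {s'..1} ?h = integral {s..1} ?h"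
    using assms True integrable_on_rhorad_div[OF \<open>0 < s\<close>]
    by (intro Henstock_Kurzweil_Integration.integral_combine) auto
  moreover have "0 \<le> integral {s..s'} ?h"
    using assms integrable_on_rhorad_div[OF \<open>0 < s\<close>] nonneg by (intro integral_nonneg) auto
  ultimately show ?thesis
    using assms True by (simp add: Qrad_eq_integral)
next
  case False
  then show ?thesis using Qrad_nonneg[OF nonneg \<open>0 < s\<close>] by (simp add: Qrad_eq_0[OF vanish])
qed

lemma Qrad_le_powr:
  assumes bound: "\<And>t. 0 < t \<Longrightarrow> t \<le> 1 \<Longrightarrow> rhorad t \<le> B * t powr (- a)"
    and "0 \<le> B" "0 < a" "0 < s"
  shows "Qrad rhorad s \<le> B / a * s powr (- a)"
proof (cases "s \<le> 1")
  case True
  let ?F = "\<lambda>t. - (B / a) * t powr (- a)"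
  have primitive: "((\<lambda>t. B * t powr (- a - 1)) has_integral (?F 1 - ?F s)) {s..1}"
  proof (rule fundamental_theorem_of_calculus)
    fix t assume "t \<in> {s..1}"
    then have "(?F has_real_derivative - (B / a) * (- a * t powr (- a - 1))) (at t)"
      using \<open>0 < s\<close> by (intro DERIV_cmult has_real_derivative_powr) auto
    then show "(?F has_vector_derivative B * t powr (- a - 1)) (at t within {s..1})"
      using \<open>0 < a\<close> by (simp add: has_real_derivative_iff_has_vector_derivative[symmetric] has_field_derivative_at_within)
  qed (use True in simp)
  have "Qrad rhorad s = integral {s..1} (\<lambda>t. rhorad t / t)"
    using \<open>0 < s\<close> True by (rule Qrad_eq_integral)
  also have "\<dots> \<le> integral {s..1} (\<lambda>t. B * t powr (- a - 1))"
  proof (rule integral_le)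
    fix t assume "t \<in> {s..1}"
    then have "rhorad t / t \<le> B * t powr (- a) / t"
      using bound[of t] \<open>0 < s\<close> by (simp add: divide_right_mono)
    then show "rhorad t / t \<le> B * t powr (- a - 1)"
      using \<open>t \<in> {s..1}\<close> \<open>0 < s\<close> by (simp add: powr_diff)
  qed (use integrable_on_rhorad_div[OF \<open>0 < s\<close>] primitive in auto)
  also have "\<dots> = ?F 1 - ?F s" using primitive by (rule integral_unique)
  also have "\<dots> \<le> B / a * s powr (- a)" using \<open>0 \<le> B\<close> \<open>0 < a\<close> by simp
  finally show ?thesis .
next
  case False
  then show ?thesis using assms by (simp add: Qrad_eq_0[OF vanish])
qed

end

lemma borel_measurable_radial_antimono:
  fixes g :: "real \<Rightarrow> real"
  assumes antimono: "\<And>s t. 0 < s \<Longrightarrow> s \<le> t \<Longrightarrow> g t \<le> g s"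
  shows "(\<lambda>z::'a::euclidean_space. g (norm z)) \<in> borel_measurable lborel"
proof -
  have "(\<lambda>s. - g (max s 0)) \<in> borel_measurable borel"
  proof (rule borel_measurable_piecewise_mono[of "{{..0}, {0<..}}"])
    fix c :: "real set" assume "c \<in> {{..0}, {0<..}}"
    then show "mono_on c (\<lambda>s. - g (max s 0))"
      by (auto simp: mono_on_def antimono)
  qed auto
  then have "(\<lambda>z::'a. - g (max (norm z) 0)) \<in> borel_measurable borel"
    by (rule measurable_compose[OF borel_measurable_norm])
  then have "(\<lambda>z::'a. - (- g (max (norm z) 0))) \<in> borel_measurable borel"
    by (rule borel_measurable_uminus)
  then show ?thesis
    unfolding measurable_lborel2 by simp
qed

lemma dyadic_shell:
  fixes x :: real
  assumes "0 < x" "x \<le> 1"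
  obtains n where "(1/2) ^ Suc n < x" "x \<le> (1/2) ^ n"
proof -
  obtain N where "(1/2::real) ^ N < x"
    using real_arch_pow_inv[of x "1/2"] \<open>0 < x\<close> by auto
  then obtain k where "(1/2::real) ^ k < x" "\<And>i. i < k \<Longrightarrow> \<not> (1/2::real) ^ i < x"
    using ex_least_nat_le[of "\<lambda>m. (1/2::real) ^ m < x" N] \<open>x \<le> 1\<close> by auto
  moreover from this \<open>x \<le> 1\<close> obtain n where "k = Suc n"
    by (cases k) auto
  ultimately show ?thesis using that by (simp add: not_less)
qed

lemma power_powr_commute:
  fixes x :: real
  assumes "0 < x"
  shows "(x ^ k) powr a = (x powr a) ^ k"
proof -
  have "(x ^ k) powr a = (x powr real k) powr a"
    using assms by (simp add: powr_realpow)
  also have "\<dots> = (x powr a) powr real k"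
    by (simp add: powr_powr mult.commute)
  also have "\<dots> = (x powr a) ^ k"
    using assms by (simp add: powr_realpow)
  finally show ?thesis .
qed

lemma summable_dyadic_ball_indicators:
  fixes z :: "'a::real_normed_vector" and c :: "nat \<Rightarrow> real"
  assumes "z \<noteq> 0"
  shows "summable (\<lambda>n. c n * indicator (ball 0 (2 * (1/2) ^ n)) z)"
proof -
  obtain N where N: "(1/2::real) ^ N < norm z / 2"
    using real_arch_pow_inv[of "norm z / 2" "1/2"] assms by auto
  have "c n * indicator (ball 0 (2 * (1/2) ^ n)) z = 0" if "n \<notin> {..<N}" for n
  proof -
    have "(1/2::real) ^ n \<le> (1/2) ^ N"
      using that by (intro power_decreasing) auto
    with N have "2 * (1/2) ^ n < norm z"
      by linarith
    then show ?thesis by simp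
  qed
  then show ?thesis
    using summable_finite[of "{..<N}" "\<lambda>n. c n * indicator (ball 0 (2 * (1/2) ^ n)) z"] by blast
qed

text \<open>With q = 2 powr a this sum dominates M * norm z powr (- a) on the unit ball; the integrals
  of its terms form a geometric series of ratio q / 2 ^ DIM('a).\<close>

lemma integrable_dyadic_ball_indicators_sum:
  fixes q :: real
  assumes "0 \<le> M" "0 < q" "q < 2 ^ DIM('a)"
  shows "integrable lborel (\<lambda>z::'a::euclidean_space. \<Sum>n. M * q ^ Suc n * indicator (ball 0 (2 * (1/2) ^ n)) z)"
proof -
  define f where "f n z = M * q ^ Suc n * indicator (ball (0::'a) (2 * (1/2) ^ n)) z" for n z
  define V where "V = measure lborel (ball (0::'a) 1)"
  have f_nonneg: "0 \<le> f n z" for n z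
    using assms by (simp add: f_def)
  have f_int: "integrable lborel (f n)" for n
    unfolding f_def by (intro integrable_mult_right integrable_real_indicator emeasure_lborel_ball_finite) auto
  have "(LINT z|lborel. norm (f n z)) = (2 ^ DIM('a) * M * q * V) * (q / 2 ^ DIM('a)) ^ n" for n
  proof -
    have "(LINT z|lborel. norm (f n z)) = M * q ^ Suc n * (2 * (1/2) ^ n) ^ DIM('a) * V"
      using f_nonneg content_ball_conv_unit_ball[of "2 * (1/2) ^ n" "0::'a"]
      by (simp add: f_def V_def)
    also have "\<dots> = (2 ^ DIM('a) * M * q * V) * (q / 2 ^ DIM('a)) ^ n"
      by (simp add: power_mult_distrib power_divide field_simps flip: power_mult)
    finally show ?thesis .
  qed
  then have summable_int: "summable (\<lambda>n. LINT z|lborel. norm (f n z))"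
    using assms by (simp add: summable_mult summable_geometric)
  have summable_norm: "summable (\<lambda>n. norm (f n z))" if "z \<noteq> 0" for z
  proof -
    have "norm (f n z) = f n z" for n
      using f_nonneg[of n z] by simp
    then show ?thesis
      using summable_dyadic_ball_indicators[OF that] unfolding f_def by simp
  qed
  have "AE z in lborel. summable (\<lambda>n. norm (f n z))"
    using AE_lborel_singleton[of 0] by (rule AE_mp) (intro AE_I2 impI summable_norm)
  from integrable_suminf[OF f_int this summable_int] show ?thesis
    by (simp add: f_def)
qed

lemma integrable_radial_powr_bound:
  fixes K :: "'a::euclidean_space \<Rightarrow> real"
  assumes meas: "K \<in> borel_measurable lborel"
    and bound: "\<And>z. z \<noteq> 0 \<Longrightarrow> \<bar>K z\<bar> \<le> M * norm z powr (- a)"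
    and vanish: "\<And>z. 1 < norm z \<Longrightarrow> K z = 0"
    and "0 \<le> a" "a < DIM('a)"
  shows "integrable lborel K"
proof -
  obtain b :: 'a where "b \<in> Basis" using nonempty_Basis by blast
  then have "0 \<le> M" using bound[of b] by (simp add: nonzero_Basis order_trans[OF abs_ge_zero])
  define q :: real where "q = (1/2) powr (- a)"
  define f where "f n z = M * q ^ Suc n * indicator (ball (0::'a) (2 * (1/2) ^ n)) z" for n z
  have "q = 2 powr a"
    unfolding q_def by (simp add: powr_minus_divide powr_divide)
  then have "0 < q" by simp
  have "q < 2 powr real DIM('a)"
    unfolding \<open>q = 2 powr a\<close> using \<open>a < DIM('a)\<close> by (intro powr_less_mono) auto
  also have "\<dots> = 2 ^ DIM('a)" by (rule powr_realpow) simp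
  finally have "q < 2 ^ DIM('a)" .
  then have majorant_int: "integrable lborel (\<lambda>z. \<Sum>n. f n z)"
    unfolding f_def by (rule integrable_dyadic_ball_indicators_sum[OF \<open>0 \<le> M\<close> \<open>0 < q\<close>])
  have dominated: "\<bar>K z\<bar> \<le> (\<Sum>n. f n z)" if "z \<noteq> 0" "norm z \<le> 1" for z
  proof -
    have "0 < norm z" using \<open>z \<noteq> 0\<close> by simp
    then obtain n where n: "(1/2) ^ Suc n < norm z" "norm z \<le> (1/2) ^ n"
      using \<open>norm z \<le> 1\<close> by (rule dyadic_shell)
    have "norm z powr (- a) \<le> ((1/2) ^ Suc n) powr (- a)"
      using n(1) \<open>0 \<le> a\<close> by (intro powr_mono2') auto
    with bound[OF \<open>z \<noteq> 0\<close>] \<open>0 \<le> M\<close> have "\<bar>K z\<bar> \<le> M * ((1/2) ^ Suc n) powr (- a)"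
      by (meson order_trans mult_left_mono)
    also have "\<dots> = M * q ^ Suc n"
      using power_powr_commute[of "1/2" "Suc n" "- a"] by (simp add: q_def)
    also have "\<dots> = f n z"
    proof -
      have "norm z < 2 * (1/2) ^ n"
        using n(2) zero_less_power[of "1/2::real" n] by linarith
      then show ?thesis by (simp add: f_def)
    qed
    also have "\<dots> \<le> (\<Sum>n. f n z)"
    proof -
      have "summable (\<lambda>n. f n z)"
        unfolding f_def by (rule summable_dyadic_ball_indicators[OF \<open>z \<noteq> 0\<close>])
      moreover have "0 \<le> f m z" for m
        using \<open>0 \<le> M\<close> \<open>0 < q\<close> by (simp add: f_def)
      ultimately show ?thesis
        using sum_le_suminf[of "\<lambda>n. f n z" "{n}"] by simp
    qed
    finally show ?thesis .
  qed
  have pointwise: "norm (K z) \<le> norm (\<Sum>n. f n z)" if "z \<noteq> 0" for z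
  proof -
    have "0 \<le> (\<Sum>n. f n z)"
      using summable_dyadic_ball_indicators[OF that] \<open>0 \<le> M\<close> \<open>0 < q\<close>
      by (auto simp: f_def intro: suminf_nonneg)
    with dominated[OF that] vanish[of z] show ?thesis
      by (cases "norm z \<le> 1") auto
  qed
  have "AE z in lborel. norm (K z) \<le> norm (\<Sum>n. f n z)"
    using AE_lborel_singleton[of 0] by (rule AE_mp) (intro AE_I2 impI pointwise)
  with majorant_int meas show ?thesis
    by (rule Bochner_Integration.integrable_bound)
qed

lemma integrable_Qrad_kernel:
  fixes rhorad :: "real \<Rightarrow> real"
  assumes vanish: "\<And>t. 1 < t \<Longrightarrow> rhorad t = 0" and cont: "continuous_on {0<..} rhorad"
    and nonneg: "\<And>t. 0 < t \<Longrightarrow> 0 \<le> rhorad t"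
    and bound: "\<And>t. 0 < t \<Longrightarrow> t \<le> 1 \<Longrightarrow> rhorad t \<le> B * t powr (- a)"
    and "0 \<le> B" "0 < a" "a < DIM('a)"
  shows "integrable lborel (\<lambda>z::'a::euclidean_space. Qrad rhorad (norm z))"
proof (rule integrable_radial_powr_bound)
  show "(\<lambda>z::'a. Qrad rhorad (norm z)) \<in> borel_measurable lborel"
    using Qrad_antimono[OF vanish cont nonneg] by (rule borel_measurable_radial_antimono)
  show "\<bar>Qrad rhorad (norm z)\<bar> \<le> B / a * norm z powr (- a)" if "z \<noteq> 0" for z :: 'a
    using that Qrad_nonneg[OF vanish cont nonneg] Qrad_le_powr[OF vanish cont bound \<open>0 \<le> B\<close> \<open>0 < a\<close>]
    by simp
  show "Qrad rhorad (norm z) = 0" if "1 < norm z" for z :: 'a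
    using Qrad_eq_0[OF vanish that] .
qed (use \<open>0 < a\<close> \<open>a < DIM('a)\<close> in auto)

section \<open>Anisotropic convolution with an integrable kernel\<close>

lemma uniform_limit_vec_lambda:
  fixes f :: "'i::finite \<Rightarrow> 'k \<Rightarrow> 'a \<Rightarrow> real"
  assumes "\<And>i. uniform_limit S (f i) (g i) F"
  shows "uniform_limit S (\<lambda>k x. \<chi> i. f i k x) (\<lambda>x. \<chi> i. g i x) F"
  unfolding uniform_limit_iff
proof (intro allI impI)
  fix e :: real assume "e > 0"
  then have "\<forall>\<^sub>F k in F. \<forall>i. \<forall>x\<in>S. dist (f i k x) (g i x) < e / CARD('i)"
    using assms by (intro eventually_all_finite) (simp add: uniform_limit_iff)
  then show "\<forall>\<^sub>F k in F. \<forall>x\<in>S. dist (\<chi> i. f i k x) (\<chi> i. g i x) < e"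
  proof (rule eventually_mono, intro ballI)
    fix k x assume close: "\<forall>i. \<forall>x\<in>S. dist (f i k x) (g i x) < e / CARD('i)" and "x \<in> S"
    have "dist (\<chi> i. f i k x) (\<chi> i. g i x) \<le> (\<Sum>i\<in>UNIV. \<bar>f i k x - g i x\<bar>)"
      using norm_le_l1_cart[of "(\<chi> i. f i k x) - (\<chi> i. g i x)"] by (simp add: dist_norm)
    also have "\<dots> < (\<Sum>i\<in>(UNIV::'i set). e / CARD('i))"
      using close \<open>x \<in> S\<close> by (intro sum_strict_mono) (auto simp: dist_real_def)
    also have "\<dots> = e" by simp
    finally show "dist (\<chi> i. f i k x) (\<chi> i. g i x) < e" .
  qed
qed

definition aniso_conv :: "(real^3 \<Rightarrow> real) \<Rightarrow> real \<times> real \<Rightarrow> (real^3 \<Rightarrow> real) \<Rightarrow> real^3 \<Rightarrow> real"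
  where "aniso_conv K r psi x = integral UNIV (\<lambda>z. K z * psi (x - Tmat r z))"

lemma Qop_eq_aniso_conv: "Qop rhorad = aniso_conv (\<lambda>z. Qrad rhorad (norm z))"
  by (simp add: fun_eq_iff Qop_def aniso_conv_def)

lemma bounded_linear_Tmat: "bounded_linear (Tmat r)"
  by (simp add: linear_conv_bounded_linear[symmetric] linear_iff Tmat_def vec_eq_iff algebra_simps)

lemma Tmat_diff: "Tmat r z - Tmat r' z = Tmat (r - r') z"
  by (simp add: Tmat_def vec_eq_iff algebra_simps)

lemma norm_Tmat_le: "norm (Tmat r z) \<le> 3 * norm r * norm z"
proof -
  have "\<bar>Tmat r z $ i\<bar> \<le> norm r * norm z" for i
  proof -
    have "\<bar>fst r\<bar> \<le> norm r" "\<bar>snd r\<bar> \<le> norm r"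
      using norm_fst_le[of "fst r" "snd r"] norm_snd_le[of "snd r" "fst r"] by simp_all
    with component_le_norm_cart[of z i] show ?thesis
      using mult_mono[of "\<bar>fst r\<bar>" "norm r" "\<bar>z $ i\<bar>" "norm z"]
        mult_mono[of "\<bar>snd r\<bar>" "norm r" "\<bar>z $ i\<bar>" "norm z"]
      by (cases "i = 3") (simp_all add: Tmat_def abs_mult)
  qed
  then have "(\<Sum>i\<in>UNIV. \<bar>Tmat r z $ i\<bar>) \<le> (\<Sum>i\<in>(UNIV::3 set). norm r * norm z)"
    by (rule sum_mono)
  with norm_le_l1_cart[of "Tmat r z"] show ?thesis
    by simp
qed

lemma aniso_conv_lebesgue:
  assumes K: "integrable lborel K"
    and psi: "continuous_on UNIV psi" "bounded (range psi)"
  shows "integrable lborel (\<lambda>z. K z * psi (x - Tmat r z))"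
    and "aniso_conv K r psi x = (LINT z|lborel. K z * psi (x - Tmat r z))"
proof -
  obtain B where B: "\<And>y. \<bar>psi y\<bar> \<le> B"
    using psi(2) by (auto simp: bounded_iff)
  have "continuous_on UNIV (\<lambda>z. psi (x - Tmat r z))"
    by (intro continuous_on_compose2[OF psi(1)] continuous_intros
        linear_continuous_on[OF bounded_linear_Tmat]) auto
  then have "(\<lambda>z. psi (x - Tmat r z)) \<in> borel_measurable lborel"
    unfolding measurable_lborel2 by (rule borel_measurable_continuous_onI)
  with K have "(\<lambda>z. K z * psi (x - Tmat r z)) \<in> borel_measurable lborel"
    by (intro borel_measurable_times) auto
  moreover have "norm (K z * psi (x - Tmat r z)) \<le> norm (B * K z)" for z
  proof -
    have "\<bar>psi (x - Tmat r z)\<bar> \<le> \<bar>B\<bar>"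
      using B[of "x - Tmat r z"] by linarith
    from mult_left_mono[OF this abs_ge_zero[of "K z"]] show ?thesis
      by (simp add: abs_mult mult.commute)
  qed
  moreover have "integrable lborel (\<lambda>z. B * K z)"
    using K by simp
  ultimately show int: "integrable lborel (\<lambda>z. K z * psi (x - Tmat r z))"
    by (metis (no_types, lifting) AE_I2 Bochner_Integration.integrable_bound)
  then show "aniso_conv K r psi x = (LINT z|lborel. K z * psi (x - Tmat r z))"
    unfolding aniso_conv_def by (rule integral_lborel)
qed

lemma abs_aniso_conv_diff_le:
  assumes K: "integrable lborel K" and K_vanish: "\<And>z. 1 < norm z \<Longrightarrow> K z = 0"
    and psi: "continuous_on UNIV psi" "bounded (range psi)"
    and close: "\<And>y y'. dist y' y \<le> 3 * dist r r' \<Longrightarrow> \<bar>psi y' - psi y\<bar> \<le> c"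
  shows "\<bar>aniso_conv K r psi x - aniso_conv K r' psi x\<bar> \<le> c * (LINT z|lborel. \<bar>K z\<bar>)"
proof -
  have pointwise: "\<bar>K z * psi (x - Tmat r z) - K z * psi (x - Tmat r' z)\<bar> \<le> c * \<bar>K z\<bar>" for z
  proof (cases "norm z \<le> 1")
    case True
    have "dist (x - Tmat r z) (x - Tmat r' z) = norm (Tmat (r - r') z)"
      by (simp add: dist_norm Tmat_diff[symmetric] norm_minus_commute)
    also have "\<dots> \<le> 3 * norm (r - r') * norm z"
      by (rule norm_Tmat_le)
    also have "\<dots> \<le> 3 * dist r r'"
      using True mult_left_mono[OF True, of "3 * norm (r - r')"] by (simp add: dist_norm)
    finally have "\<bar>psi (x - Tmat r z) - psi (x - Tmat r' z)\<bar> \<le> c"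
      by (rule close)
    from mult_left_mono[OF this abs_ge_zero[of "K z"]] show ?thesis
      by (simp add: right_diff_distrib[symmetric] abs_mult mult.commute)
  qed (use K_vanish in simp)
  note conv = aniso_conv_lebesgue[OF K psi, where x = x]
  have "\<bar>aniso_conv K r psi x - aniso_conv K r' psi x\<bar>
      = \<bar>LINT z|lborel. K z * psi (x - Tmat r z) - K z * psi (x - Tmat r' z)\<bar>"
    using conv(1)[where r = r] conv(1)[where r = r'] by (simp add: conv(2) Bochner_Integration.integral_diff)
  also have "\<dots> \<le> (LINT z|lborel. c * \<bar>K z\<bar>)"
    using conv(1)[where r = r] conv(1)[where r = r'] K pointwise by (intro integral_abs_bound_integral) auto
  finally show ?thesis by simp
qed

lemma uniform_limit_aniso_conv:
  assumes K: "integrable lborel K" and K_vanish: "\<And>z. 1 < norm z \<Longrightarrow> K z = 0"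
    and psi: "uniformly_continuous_on UNIV psi" "bounded (range psi)"
    and lim: "ds \<longlonglongrightarrow> d"
  shows "uniform_limit UNIV (\<lambda>k. aniso_conv K (ds k) psi) (aniso_conv K d psi) sequentially"
  unfolding uniform_limit_iff
proof (intro allI impI)
  fix e :: real assume "e > 0"
  define I where "I = (LINT z|lborel. \<bar>K z\<bar>)"
  have "I \<ge> 0" unfolding I_def by (rule Bochner_Integration.integral_nonneg) simp
  define c where "c = e / (I + 1)"
  have "c > 0" using \<open>e > 0\<close> \<open>I \<ge> 0\<close> by (simp add: c_def)
  have "c * I < c * (I + 1)" using \<open>c > 0\<close> by simp
  also have "\<dots> = e" using \<open>I \<ge> 0\<close> by (simp add: c_def)
  finally have "c * I < e" .
  have "\<exists>\<delta>>0. \<forall>y\<in>UNIV. \<forall>y'\<in>UNIV. dist y' y < \<delta> \<longrightarrow> dist (psi y') (psi y) < c"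
    using psi(1) \<open>c > 0\<close> by (simp add: uniformly_continuous_on_def)
  then obtain \<delta> where "\<delta> > 0" and \<delta>: "\<And>y y'. dist y' y < \<delta> \<Longrightarrow> dist (psi y') (psi y) < c"
    by blast
  have "\<forall>\<^sub>F k in sequentially. dist (ds k) d < \<delta> / 3"
    using lim \<open>\<delta> > 0\<close> by (intro tendstoD) simp_all
  then show "\<forall>\<^sub>F k in sequentially. \<forall>x\<in>UNIV. dist (aniso_conv K (ds k) psi x) (aniso_conv K d psi x) < e"
  proof (rule eventually_mono, intro ballI)
    fix k x assume "dist (ds k) d < \<delta> / 3"
    then have "\<bar>psi y' - psi y\<bar> \<le> c" if "dist y' y \<le> 3 * dist (ds k) d" for y y'
      using \<delta>[of y' y] that by (simp add: dist_real_def)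
    then have "\<bar>aniso_conv K (ds k) psi x - aniso_conv K d psi x\<bar> \<le> c * I"
      unfolding I_def using K K_vanish uniformly_continuous_imp_continuous[OF psi(1)] psi(2)
      by (intro abs_aniso_conv_diff_le)
    with \<open>c * I < e\<close> show "dist (aniso_conv K (ds k) psi x) (aniso_conv K d psi x) < e"
      by (simp add: dist_real_def)
  qed
qed

lemma aniso_conv_linearization_le:
  fixes P :: "3 \<Rightarrow> real^3 \<Rightarrow> real"
  assumes K: "integrable lborel K"
    and phi: "continuous_on UNIV phi" "bounded (range phi)"
    and P: "\<And>i. continuous_on UNIV (P i)" "\<And>i. bounded (range (P i))"
    and taylor: "\<And>y. \<bar>phi (y + h) - phi y - (\<Sum>i\<in>UNIV. h $ i * P i y)\<bar> \<le> b"
  shows "\<bar>aniso_conv K r phi (x + h) - aniso_conv K r phi x - (\<Sum>i\<in>UNIV. h $ i * aniso_conv K r (P i) x)\<bar>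
    \<le> b * (LINT z|lborel. \<bar>K z\<bar>)"
proof -
  note phi_int = aniso_conv_lebesgue[OF K phi]
  note P_int = aniso_conv_lebesgue[OF K P(1) P(2)]
  define G where "G z = K z * (phi (x - Tmat r z + h) - phi (x - Tmat r z)
    - (\<Sum>i\<in>UNIV. h $ i * P i (x - Tmat r z)))" for z
  have "x + h - Tmat r z = x - Tmat r z + h" for z by simp
  then have G_eq: "G z = K z * phi (x + h - Tmat r z) - K z * phi (x - Tmat r z)
    - (\<Sum>i\<in>UNIV. h $ i * (K z * P i (x - Tmat r z)))" for z
    by (simp add: G_def algebra_simps sum_distrib_left)
  have "aniso_conv K r phi (x + h) - aniso_conv K r phi x - (\<Sum>i\<in>UNIV. h $ i * aniso_conv K r (P i) x)
      = (LINT z|lborel. G z)"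
    unfolding G_eq phi_int(2) P_int(2)
    using phi_int(1) P_int(1) by (simp add: Bochner_Integration.integral_sum)
  also have "\<bar>\<dots>\<bar> \<le> (LINT z|lborel. b * \<bar>K z\<bar>)"
  proof (rule integral_abs_bound_integral)
    show "integrable lborel G"
      unfolding G_eq using phi_int(1) P_int(1) by auto
    show "\<bar>G z\<bar> \<le> b * \<bar>K z\<bar>" for z
      using mult_left_mono[OF taylor[of "x - Tmat r z"] abs_ge_zero[of "K z"]]
      by (simp add: G_def abs_mult mult.commute)
  qed (use K in auto)
  finally show ?thesis by simp
qed

lemma has_derivative_aniso_conv:
  fixes P :: "3 \<Rightarrow> real^3 \<Rightarrow> real"
  assumes K: "integrable lborel K"
    and phi: "bounded (range phi)"
    and deriv: "\<And>w. (phi has_derivative (\<lambda>h. \<Sum>i\<in>UNIV. h $ i * P i w)) (at w)"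
    and P: "\<And>i. uniformly_continuous_on UNIV (P i)" "\<And>i. bounded (range (P i))"
  shows "(aniso_conv K r phi has_derivative (\<lambda>h. \<Sum>i\<in>UNIV. h $ i * aniso_conv K r (P i) x)) (at x)"
  unfolding has_derivative_at_alt
proof (intro conjI allI impI)
  show "bounded_linear (\<lambda>h. \<Sum>i\<in>UNIV. h $ i * aniso_conv K r (P i) x)"
    by (intro bounded_linear_intros bounded_linear_vec_nth)
  fix e :: real assume "e > 0"
  define I where "I = (LINT z|lborel. \<bar>K z\<bar>)"
  have "I \<ge> 0" unfolding I_def by (rule Bochner_Integration.integral_nonneg) simp
  define c where "c = e / (I + 1)"
  have "c > 0" using \<open>e > 0\<close> \<open>I \<ge> 0\<close> by (simp add: c_def)
  have "c * I \<le> c * (I + 1)" using \<open>c > 0\<close> by simp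
  also have "\<dots> = e" using \<open>I \<ge> 0\<close> by (simp add: c_def)
  finally have "c * I \<le> e" .
  obtain \<delta> where "\<delta> > 0" and taylor:
    "\<And>y h. norm h < \<delta> \<Longrightarrow> \<bar>phi (y + h) - phi y - (\<Sum>i\<in>UNIV. h $ i * P i y)\<bar> \<le> c * norm h"
    using uniform_linearization[OF deriv P(1) \<open>c > 0\<close>] by blast
  have phi_cont: "continuous_on UNIV phi"
    by (intro continuous_at_imp_continuous_on ballI has_derivative_continuous[OF deriv])
  have "norm (aniso_conv K r phi y - aniso_conv K r phi x - (\<Sum>i\<in>UNIV. (y - x) $ i * aniso_conv K r (P i) x))
      \<le> e * norm (y - x)" if "norm (y - x) < \<delta>" for y
  proof -
    have "\<bar>aniso_conv K r phi (x + (y - x)) - aniso_conv K r phi x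
        - (\<Sum>i\<in>UNIV. (y - x) $ i * aniso_conv K r (P i) x)\<bar> \<le> c * norm (y - x) * I"
      unfolding I_def using uniformly_continuous_imp_continuous[OF P(1)]
      by (rule aniso_conv_linearization_le[OF K phi_cont phi _ P(2) taylor[OF that]])
    also have "\<dots> \<le> e * norm (y - x)"
      using mult_right_mono[OF \<open>c * I \<le> e\<close> norm_ge_zero[of "y - x"]] by (simp add: ac_simps)
    finally show ?thesis by simp
  qed
  then show "\<exists>\<delta>>0. \<forall>y. norm (y - x) < \<delta> \<longrightarrow>
      norm (aniso_conv K r phi y - aniso_conv K r phi x - (\<Sum>i\<in>UNIV. (y - x) $ i * aniso_conv K r (P i) x))
      \<le> e * norm (y - x)"
    using \<open>\<delta> > 0\<close> by blast
qed

theorem lemma2p18: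
  fixes rhorad :: "real \<Rightarrow> real"
    and eta0 nu sigma gamma :: real
    and ds :: "nat \<Rightarrow> real \<times> real" and d :: "real \<times> real"
    and phi :: "real^3 \<Rightarrow> real"
  assumes params: "eta0 > 0" "nu > 0" "0 < sigma" "sigma \<le> gamma" "gamma < 1"
    and nonneg: "\<forall>r>0. rhorad r \<ge> 0"
    and H0_inf: "\<exists>c>0. \<forall>z::real^3. 0 < norm z \<and> norm z < eta0 \<longrightarrow> rhorad (norm z) \<ge> c"
    and H0_supp: "closure {z::real^3. z \<noteq> 0 \<and> rhorad (norm z) \<noteq> 0} = cball 0 1"
    and H0_int: "((\<lambda>z::real^3. rhorad (norm z)) has_integral 3) UNIV"
    and H1: "\<forall>s t. 0 < s \<and> s \<le> t \<longrightarrow> t powr (nu + 1) * rhorad t \<le> s powr (nu + 1) * rhorad s"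
    and H2_smooth: "\<forall>k. \<forall>r>0. ((deriv ^^ k) (\<lambda>t. t * rhorad t)) differentiable (at r)"
    and H2_bound: "\<forall>k. \<exists>C. \<forall>r. 0 < r \<and> r < eta0 \<longrightarrow>
                    \<bar>(deriv ^^ k) (\<lambda>t. t * rhorad t) r\<bar> \<le> C * (r * rhorad r) / r ^ k"
    and H3: "\<exists>C>0. \<forall>t1 t2. 0 < t1 \<and> t1 < t2 \<and> t2 < eta0 \<longrightarrow>
               t1 powr (2 + sigma) * rhorad t1 \<ge> C * (t2 powr (2 + sigma) * rhorad t2)"
    and H4: "\<exists>C>0. \<forall>t1 t2. 0 < t1 \<and> t1 < t2 \<and> t2 < eta0 \<longrightarrow>
               t1 powr (2 + gamma) * rhorad t1 \<le> C * (t2 powr (2 + gamma) * rhorad t2)"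
    and ds_range: "\<forall>k. ds k \<in> {0..1} \<times> {0..1}"
    and d_range: "d \<in> {0..1} \<times> {0..1}"
    and ds_lim: "ds \<longlonglongrightarrow> d"
    and phi: "Cc_inf3 phi"
  shows "uniform_limit UNIV (\<lambda>k. Qop rhorad (ds k) phi) (Qop rhorad d phi) sequentially
       \<and> uniform_limit UNIV (\<lambda>k. Dop rhorad (ds k) phi) (Dop rhorad d phi) sequentially"
proof -
  define K where "K = (\<lambda>z::real^3. Qrad rhorad (norm z))"
  have vanish: "\<And>t. 1 < t \<Longrightarrow> rhorad t = 0"
    by (rule rhorad_eq_0_if_support_cball[OF H0_supp])
  have cont: "continuous_on {0<..} rhorad"
    using spec[OF H2_smooth, of 0] by (intro continuous_on_if_times_differentiable) simp
  have rho_nonneg: "\<And>t. 0 < t \<Longrightarrow> 0 \<le> rhorad t"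
    and mono: "\<And>s t. 0 < s \<Longrightarrow> s \<le> t \<Longrightarrow> t powr (nu + 1) * rhorad t \<le> s powr (nu + 1) * rhorad s"
    using nonneg H1 by blast+
  obtain C where almost_mono: "\<And>t1 t2. 0 < t1 \<Longrightarrow> t1 < t2 \<Longrightarrow> t2 < eta0 \<Longrightarrow>
      t1 powr (2 + gamma) * rhorad t1 \<le> C * (t2 powr (2 + gamma) * rhorad t2)"
    using H4 by blast
  have "0 \<le> 2 + gamma" "0 \<le> nu + 1" using params by auto
  then obtain B where B: "0 \<le> B"
    "\<And>t. 0 < t \<Longrightarrow> t \<le> 1 \<Longrightarrow> rhorad t \<le> B * t powr (- (2 + gamma))"
    using rhorad_le_powr[OF rho_nonneg mono almost_mono params(1)] by blast
  have K: "integrable lborel K" "\<And>z. 1 < norm z \<Longrightarrow> K z = 0"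
    unfolding K_def using params Qrad_eq_0[OF vanish]
    by (auto intro: integrable_Qrad_kernel[OF vanish cont rho_nonneg B(2) B(1)])
  note phi_reg = Cc_inf3_uniformly_continuous_bounded[OF phi]
  have "smooth3 phi" using phi by (simp add: Cc_inf3_def)
  then have Dop_eq: "Dop rhorad r phi = (\<lambda>x. \<chi> i. aniso_conv K r (pderiv3 i phi) x)" for r
    unfolding Dop_def Qop_eq_aniso_conv K_def[symmetric] using phi_reg
    by (intro ext grad3_eqI has_derivative_aniso_conv[OF K(1)] has_derivative_pderiv3
        smooth3_pderiv3_differentiable)
  show ?thesis
    unfolding Dop_eq Qop_eq_aniso_conv K_def[symmetric] using phi_reg
    by (intro conjI uniform_limit_vec_lambda uniform_limit_aniso_conv[OF K _ _ ds_lim])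
qed

end
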